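(* Let $k,l\geq 1$ be integers, $n=2^k$ and $m=2^l$. For the Ducci map $D:\mathbb{Z}_m^n\to\mathbb{Z}_m^n$, we have $L_m(n)=(l+1)2^{k-1}$ and $P_m(n)=1$.
   Context: For integers $m\ge 2$, $n\ge 2$, the Ducci function $D:\mathbb{Z}_m^n\to\mathbb{Z}_m^n$ is $D(x_1,\dots,x_n)=(x_1+x_2 \bmod m, x_2+x_3\bmod m,\dots,x_n+x_1\bmod m)$. For $\mathbf{u}\in\mathbb{Z}_m^n$, $Len(\mathbf{u})$ is the smallest integer $\alpha\ge 0$ such that there exists an integer $\beta\ge 1$ with $D^{\alpha+\beta}(\mathbf{u})=D^{\alpha}(\mathbf{u})$, and $Per(\mathbf{u})$ is the smallest integer $\beta\geq 1$ such that $D^{Len(\mathbf{u})+\beta}(\mathbf{u})=D^{Len(\mathbf{u})}(\mathbf{u})$. Define $L_m(n)=Len(0,0,\dots,0,1)$ and $P_m(n)=Per(0,0,\dots,0,1)$, where $(0,\dots,0,1)\in\mathbb{Z}_m^n$. *)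

theory Defs
  imports Main
begin

text \<open>Elements of Z_m^n are represented as functions nat => nat, where only the
  values at indices 0..n-1 matter (coordinate x_{i+1} is stored at index i);
  all vectors we build are canonical: entries in {0..<m} at indices < n and 0 elsewhere.\<close>

definition ducci :: "nat \<Rightarrow> nat \<Rightarrow> (nat \<Rightarrow> nat) \<Rightarrow> (nat \<Rightarrow> nat)" where
  "ducci m n x = (\<lambda>i. if i < n then (x i + x (Suc i mod n)) mod m else 0)"

definition Len :: "nat \<Rightarrow> nat \<Rightarrow> (nat \<Rightarrow> nat) \<Rightarrow> nat" where
  "Len m n u = (LEAST a. \<exists>b\<ge>1. (ducci m n ^^ (a + b)) u = (ducci m n ^^ a) u)"

definition Per :: "nat \<Rightarrow> nat \<Rightarrow> (nat \<Rightarrow> nat) \<Rightarrow> nat" where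
  "Per m n u = (LEAST b. b \<ge> 1 \<and>
      (ducci m n ^^ (Len m n u + b)) u = (ducci m n ^^ Len m n u) u)"

text \<open>The vector (0,...,0,1) in Z_m^n (m >= 2, so 1 mod m = 1).\<close>
definition e_last :: "nat \<Rightarrow> nat \<Rightarrow> nat" where
  "e_last n = (\<lambda>i. if i = n - 1 then 1 else 0)"

definition L_fun :: "nat \<Rightarrow> nat \<Rightarrow> nat" where
  "L_fun m n = Len m n (e_last n)"

definition P_fun :: "nat \<Rightarrow> nat \<Rightarrow> nat" where
  "P_fun m n = Per m n (e_last n)"

end

(* Read a vector of Z_m^n as a polynomial modulo x^n - 1. Then the Ducci map is multiplication
   by 1 + x, the vector (0,...,0,1) is x, and a vector is zero iff its polynomial lies in the
   ideal (m, x^n - 1).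

   Let n = 2h with h = 2^(k-1) and m = 2^l. Modulo 2, (1 + x)^h = 1 + x^h =: P, so
   (1 + x)^h = P + 2G, and P^2 = 2P modulo x^n - 1. Hence the binomial expansion of
   (P + 2G)^j collapses to 2^(j-1) P F + 2^j G^j with F = (1 + G)^j - G^j. For j = l + 1 this
   is divisible by 2^l, so the orbit reaches the fixed point 0 at time T = (l + 1) h. One step
   earlier, (1 + x)^(T-1) = (P + 2G)^l (1 + x)^(h-1) = 2^(l-1) F P (1 + x)^(h-1) modulo 2^l,
   and P (1 + x)^(h-1) = (1 + x)^(n-1) = 1 + x + ... + x^(n-1) modulo 2. Modulo x^n - 1,
   multiplying this all-ones polynomial by F amounts to multiplying it by the odd number
   F(1) = (1 + G(1))^l - G(1)^l, so every entry of D^(T-1)(0,...,0,1) is an odd multiple of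
   2^(l-1) modulo 2^l. *)

theory Submission
  imports Defs "HOL-Computational_Algebra.Polynomial"
begin

section \<open>Orbits that reach a fixed point\<close>

lemma funpow_fixpoint_stays:
  assumes "f z = z" and "(f ^^ s) u = z" and "s \<le> t"
  shows "(f ^^ t) u = z"
proof -
  have "(f ^^ j) z = z" for j
    using assms(1) by (induction j) simp_all
  then show ?thesis
    using assms(2,3) by (metis funpow_add le_add_diff_inverse2 comp_apply)
qed

lemma preperiod_eq_first_hit:
  assumes fixed: "f z = z" and hit: "(f ^^ T) u = z"
    and before: "\<forall>t<T. (f ^^ t) u \<noteq> z"
  shows "(LEAST a. \<exists>b\<ge>1. (f ^^ (a + b)) u = (f ^^ a) u) = T"
proof (rule Least_equality)
  show "\<exists>b\<ge>1. (f ^^ (T + b)) u = (f ^^ T) u"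
    using fixed hit by (intro exI[of _ 1]) simp
next
  fix a assume "\<exists>b\<ge>1. (f ^^ (a + b)) u = (f ^^ a) u"
  then obtain b where "1 \<le> b" and period: "(f ^^ (a + b)) u = (f ^^ a) u"
    by blast
  have "(f ^^ (a + c * b)) u = (f ^^ a) u" for c
  proof (induction c)
    case (Suc c)
    have "a + Suc c * b = c * b + (a + b)"
      by simp
    then have "(f ^^ (a + Suc c * b)) u = (f ^^ (c * b)) ((f ^^ (a + b)) u)"
      by (simp only: funpow_add comp_apply)
    also have "\<dots> = (f ^^ (c * b)) ((f ^^ a) u)"
      by (simp only: period)
    also have "\<dots> = (f ^^ (a + c * b)) u"
      by (simp only: add.commute[of a] funpow_add comp_apply)
    finally show ?case using Suc.IH by simp
  qed simp
  moreover have "T \<le> a + T * b"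
    using \<open>1 \<le> b\<close> by (metis le_add2 le_trans mult.right_neutral mult_le_mono2)
  then have "(f ^^ (a + T * b)) u = z"
    by (rule funpow_fixpoint_stays[OF fixed hit])
  ultimately show "T \<le> a"
    using before by (metis not_le)
qed

lemma Len_Per_first_hit:
  assumes "ducci m n z = z" and "(ducci m n ^^ T) u = z"
    and "\<forall>t<T. (ducci m n ^^ t) u \<noteq> z"
  shows "Len m n u = T" and "Per m n u = 1"
proof -
  show len: "Len m n u = T"
    unfolding Len_def using assms by (rule preperiod_eq_first_hit)
  show "Per m n u = 1"
    unfolding Per_def len using assms(1,2) by (intro Least_equality) (simp_all add: funpow_swap1)
qed

section \<open>Congruence modulo two elements\<close>

definition cong_pair :: "'a::comm_ring_1 \<Rightarrow> 'a \<Rightarrow> 'a \<Rightarrow> 'a \<Rightarrow> bool"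
    ("(1[_ = _] '(mod _,/ _'))") where
  "[p = q] (mod a, b) \<longleftrightarrow> (\<exists>r s. p - q = a * r + b * s)"

lemma cong_pair_refl [simp]: "[p = p] (mod a, b)"
  unfolding cong_pair_def by (auto intro!: exI[of _ 0])

lemma cong_pair_trans [trans]:
  assumes "[p = q] (mod a, b)" and "[q = r] (mod a, b)"
  shows "[p = r] (mod a, b)"
proof -
  obtain r1 s1 r2 s2 where "p - q = a * r1 + b * s1" and "q - r = a * r2 + b * s2"
    using assms unfolding cong_pair_def by blast
  then have "p - r = a * (r1 + r2) + b * (s1 + s2)"
    by (simp add: distrib_left) (metis add.assoc add.commute diff_add_cancel)
  then show ?thesis unfolding cong_pair_def by blast
qed

lemma cong_pair_dvd_left: "a dvd p - q \<Longrightarrow> [p = q] (mod a, b)"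
  unfolding cong_pair_def dvd_def by (metis add.right_neutral mult_zero_right)

lemma cong_pair_dvd_right: "b dvd p - q \<Longrightarrow> [p = q] (mod a, b)"
  unfolding cong_pair_def dvd_def by (metis add_0 mult_zero_right)

lemma cong_pair_zeroD: "[p = q] (mod a, 0) \<Longrightarrow> [p = q] (mod a, b)"
  unfolding cong_pair_def by (metis mult_zero_left mult_zero_right)

lemma cong_pair_add:
  assumes "[p = q] (mod a, b)" and "[p' = q'] (mod a, b)"
  shows "[p + p' = q + q'] (mod a, b)"
proof -
  obtain r1 s1 r2 s2 where "p - q = a * r1 + b * s1" and "p' - q' = a * r2 + b * s2"
    using assms unfolding cong_pair_def by blast
  then have "p + p' - (q + q') = a * (r1 + r2) + b * (s1 + s2)"
    by (simp add: distrib_left add_diff_add)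
  then show ?thesis unfolding cong_pair_def by blast
qed

lemma cong_pair_mult_left:
  assumes "[p = q] (mod a, b)"
  shows "[c * p = c * q] (mod a, b)"
proof -
  obtain r s where "p - q = a * r + b * s"
    using assms unfolding cong_pair_def by blast
  then have "c * p - c * q = a * (c * r) + b * (c * s)"
    by (simp add: right_diff_distrib[symmetric] algebra_simps)
  then show ?thesis unfolding cong_pair_def by blast
qed

lemma cong_pair_mult:
  assumes "[p = q] (mod a, b)" and "[p' = q'] (mod a, b)"
  shows "[p * p' = q * q'] (mod a, b)"
proof -
  have "[p * p' = p * q'] (mod a, b)" using assms(2) by (rule cong_pair_mult_left)
  also have "[p * q' = q * q'] (mod a, b)"
    using cong_pair_mult_left[OF assms(1), of q'] by (simp add: mult.commute)
  finally show ?thesis .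
qed

lemma cong_pair_power: "[p = q] (mod a, b) \<Longrightarrow> [p ^ j = q ^ j] (mod a, b)"
  by (induction j) (simp_all add: cong_pair_mult)

lemma cong_pair_scale:
  assumes "[p = q] (mod a, b)"
  shows "[c * p = c * q] (mod c * a, b)"
proof -
  obtain r s where "p - q = a * r + b * s"
    using assms unfolding cong_pair_def by blast
  then have "c * p - c * q = c * a * r + b * (c * s)"
    by (simp add: right_diff_distrib[symmetric] algebra_simps)
  then show ?thesis unfolding cong_pair_def by blast
qed

lemma cong_pair_power_plus_double:
  fixes P G :: "'a::comm_ring_1"
  assumes idem: "[P * P = 2 * P] (mod a, b)"
  shows "[(P + 2 * G) ^ Suc j =
      2 ^ j * P * ((1 + G) ^ Suc j - G ^ Suc j) + 2 ^ Suc j * G ^ Suc j] (mod a, b)"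
proof (induction j)
  case 0
  show ?case by (simp add: algebra_simps)
next
  case (Suc j)
  define F where "F = (1 + G) ^ Suc j - G ^ Suc j"
  define H where "H = 2 ^ Suc j * P * (G * F + G ^ Suc j) + 2 ^ Suc (Suc j) * G ^ Suc (Suc j)"
  have "(P + 2 * G) ^ Suc (Suc j) = (P + 2 * G) * (P + 2 * G) ^ Suc j"
    by simp
  also have "[(P + 2 * G) * (P + 2 * G) ^ Suc j =
      (P + 2 * G) * (2 ^ j * P * F + 2 ^ Suc j * G ^ Suc j)] (mod a, b)"
    using Suc.IH unfolding F_def by (rule cong_pair_mult_left)
  also have "(P + 2 * G) * (2 ^ j * P * F + 2 ^ Suc j * G ^ Suc j) = 2 ^ j * F * (P * P) + H"
    by (simp add: H_def algebra_simps)
  also have "[2 ^ j * F * (P * P) + H = 2 ^ j * F * (2 * P) + H] (mod a, b)"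
    by (intro cong_pair_add cong_pair_mult_left idem cong_pair_refl)
  also have "2 ^ j * F * (2 * P) + H =
      2 ^ Suc j * P * ((1 + G) ^ Suc (Suc j) - G ^ Suc (Suc j)) + 2 ^ Suc (Suc j) * G ^ Suc (Suc j)"
    by (simp add: F_def H_def algebra_simps)
  finally show ?case .
qed

section \<open>Powers of 1 + x modulo 2^l and x^n - 1\<close>

lemma one_plus_x_pow_two_pow:
  "[[:1, 1:] ^ 2 ^ k = 1 + [:0, 1:] ^ 2 ^ k] (mod 2, 0 :: 'a::comm_ring_1 poly)"
proof (induction k)
  case (Suc k)
  define X :: "'a poly" where "X = [:0, 1:] ^ 2 ^ k"
  have "[:1, 1:] ^ 2 ^ Suc k = ([:1, 1:] ^ 2 ^ k) ^ 2"
    by (simp add: power_mult[symmetric] mult.commute)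
  also have "[([:1, 1:] ^ 2 ^ k) ^ 2 = (1 + X) ^ 2] (mod 2, 0)"
    using Suc.IH unfolding X_def by (rule cong_pair_power)
  also have "(1 + X) ^ 2 = 1 + X * X + 2 * X"
    by (simp add: power2_eq_square algebra_simps)
  also have "[1 + X * X + 2 * X = 1 + X * X] (mod 2, 0)"
    by (rule cong_pair_dvd_left) simp
  also have "X * X = [:0, 1:] ^ 2 ^ Suc k"
    by (simp add: X_def mult_2 power_add[symmetric])
  finally show ?case .
qed (simp add: one_pCons)

lemma one_plus_x_pow_two_pow_decomp:
  obtains G :: "'a::comm_ring_1 poly" where "[:1, 1:] ^ 2 ^ k = 1 + [:0, 1:] ^ 2 ^ k + 2 * G"
proof -
  from one_plus_x_pow_two_pow[of k] obtain r s :: "'a poly"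
    where "[:1, 1:] ^ 2 ^ k - (1 + [:0, 1:] ^ 2 ^ k) = 2 * r + 0 * s"
    unfolding cong_pair_def by blast
  then have "[:1, 1:] ^ 2 ^ k = 1 + [:0, 1:] ^ 2 ^ k + 2 * r"
    by (simp only: mult_zero_left add_0_left add_0_right diff_eq_eq ac_simps)
  then show thesis by (rule that)
qed

definition ones_poly :: "nat \<Rightarrow> 'a::comm_ring_1 poly" where
  "ones_poly N = (\<Sum>j<N. [:0, 1:] ^ j)"

lemma ones_poly_add: "ones_poly (N + M) = ones_poly N + [:0, 1:] ^ N * ones_poly M"
  by (induction M) (simp_all add: ones_poly_def algebra_simps power_add)

lemma x_mult_ones_poly: "[:0, 1:] * ones_poly N = ones_poly N + ([:0, 1:] ^ N - 1)"
  using power_diff_1_eq[of "[:0, 1:] :: 'a::comm_ring_1 poly" N]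
  by (simp add: ones_poly_def one_pCons algebra_simps)

lemma mult_ones_poly_cong:
  "[q * ones_poly N = smult (poly q 1) (ones_poly N)] (mod a, [:0, 1:] ^ N - 1)"
proof (rule cong_pair_dvd_right)
  have root: "q - [:poly q 1:] = ([:0, 1:] - 1) * synthetic_div q 1"
    using synthetic_div_correct'[of 1 q] by (simp add: one_pCons algebra_simps)
  have "q * ones_poly N - smult (poly q 1) (ones_poly N) = (q - [:poly q 1:]) * ones_poly N"
    by (simp add: left_diff_distrib)
  also have "\<dots> = synthetic_div q 1 * (([:0, 1:] - 1) * ones_poly N)"
    unfolding root by (simp only: ac_simps)
  also have "([:0, 1:] - 1) * ones_poly N = [:0, 1:] ^ N - 1"
    by (simp only: left_diff_distrib mult_1_left x_mult_ones_poly) simp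
  finally show "[:0, 1:] ^ N - 1 dvd q * ones_poly N - smult (poly q 1) (ones_poly N)"
    by (metis dvd_triv_right)
qed

lemma one_plus_x_pow_two_pow_minus_one:
  "[[:1, 1:] ^ (2 ^ k - 1) = ones_poly (2 ^ k)] (mod 2, 0 :: 'a::comm_ring_1 poly)"
proof (induction k)
  case (Suc k)
  have "(2::nat) ^ Suc k - 1 = 2 ^ k + (2 ^ k - 1)"
    by simp
  then have "[:1, 1:] ^ (2 ^ Suc k - 1) = [:1, 1:] ^ 2 ^ k * [:1, 1:] ^ (2 ^ k - 1)"
    by (simp only: power_add)
  also have "[[:1, 1:] ^ 2 ^ k * [:1, 1:] ^ (2 ^ k - 1) =
      (1 + [:0, 1:] ^ 2 ^ k) * ones_poly (2 ^ k)] (mod 2, 0 :: 'a poly)"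
    using one_plus_x_pow_two_pow Suc.IH by (rule cong_pair_mult)
  also have "(1 + [:0, 1:] ^ 2 ^ k) * ones_poly (2 ^ k) = (ones_poly (2 ^ k + 2 ^ k) :: 'a poly)"
    by (simp add: ones_poly_add algebra_simps)
  also have "(2::nat) ^ k + 2 ^ k = 2 ^ Suc k"
    by simp
  finally show ?case .
qed (simp add: ones_poly_def)

lemma one_plus_x_pow_mult_pred_cong:
  "[(1 + [:0, 1:] ^ 2 ^ k) * [:1, 1:] ^ (2 ^ k - 1) = ones_poly (2 ^ Suc k)]
     (mod 2, 0 :: 'a::comm_ring_1 poly)"
proof -
  define W :: "'a poly" where "W = [:1, 1:] ^ (2 ^ k - 1)"
  define Y :: "'a poly" where "Y = [:1, 1:] ^ (2 ^ Suc k - 1)"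
  obtain G :: "'a poly" where G: "[:1, 1:] ^ 2 ^ k = 1 + [:0, 1:] ^ 2 ^ k + 2 * G"
    by (rule one_plus_x_pow_two_pow_decomp)
  have "2 ^ Suc k - 1 = 2 ^ k + (2 ^ k - 1 :: nat)"
    by simp
  then have "Y = (1 + [:0, 1:] ^ 2 ^ k + 2 * G) * W"
    unfolding Y_def W_def by (simp only: G power_add)
  then have "[(1 + [:0, 1:] ^ 2 ^ k) * W = Y] (mod 2, 0)"
    by (intro cong_pair_dvd_left) (simp add: algebra_simps)
  also have "[Y = ones_poly (2 ^ Suc k)] (mod 2, 0)"
    unfolding Y_def by (rule one_plus_x_pow_two_pow_minus_one)
  finally show ?thesis
    unfolding W_def .
qed

lemma one_plus_x_pow_square_cong:
  "[(1 + [:0, 1:] ^ h) * (1 + [:0, 1:] ^ h) = 2 * (1 + [:0, 1:] ^ h)]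
     (mod a, [:0, 1:] ^ (2 * h) - 1 :: 'a::comm_ring_1 poly)"
proof (rule cong_pair_dvd_right)
  define X :: "'a poly" where "X = [:0, 1:] ^ h"
  have "[:0, 1:] ^ (2 * h) = X * X"
    by (simp add: X_def mult_2 power_add)
  moreover have "(1 + X) * (1 + X) - 2 * (1 + X) = X * X - 1"
    by (simp add: algebra_simps mult_2)
  ultimately show "[:0, 1:] ^ (2 * h) - 1 dvd
      (1 + [:0, 1:] ^ h) * (1 + [:0, 1:] ^ h) - 2 * (1 + [:0, 1:] ^ h :: 'a poly)"
    unfolding X_def[symmetric] by (simp only: dvd_refl)
qed

lemma one_plus_x_pow_vanishes:
  assumes "1 \<le> k"
  shows "[[:1, 1:] ^ ((l + 1) * 2 ^ (k - 1)) = 0]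
     (mod 2 ^ l, [:0, 1:] ^ 2 ^ k - 1 :: 'a::comm_ring_1 poly)"
proof -
  define h :: nat where "h = 2 ^ (k - 1)"
  define E :: "'a poly" where "E = [:0, 1:] ^ 2 ^ k - 1"
  define P :: "'a poly" where "P = 1 + [:0, 1:] ^ h"
  obtain G :: "'a poly" where G: "[:1, 1:] ^ h = P + 2 * G"
    unfolding h_def P_def by (rule one_plus_x_pow_two_pow_decomp)
  have "2 ^ k = 2 * h"
    using assms by (simp add: h_def power_Suc[symmetric])
  then have idem: "[P * P = 2 * P] (mod 2 ^ l, E)"
    unfolding P_def E_def by (simp only: one_plus_x_pow_square_cong)
  have "(l + 1) * h = h * Suc l"
    by simp
  then have "[:1, 1:] ^ ((l + 1) * h) = (P + 2 * G) ^ Suc l"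
    by (simp only: power_mult G)
  also have "[(P + 2 * G) ^ Suc l =
      2 ^ l * P * ((1 + G) ^ Suc l - G ^ Suc l) + 2 ^ Suc l * G ^ Suc l] (mod 2 ^ l, E)"
    using idem by (rule cong_pair_power_plus_double)
  also have "[2 ^ l * P * ((1 + G) ^ Suc l - G ^ Suc l) + 2 ^ Suc l * G ^ Suc l = 0] (mod 2 ^ l, E)"
    by (rule cong_pair_dvd_left) (simp add: mult.assoc)
  finally show ?thesis by (simp add: h_def E_def)
qed

lemma one_plus_x_pow_before_vanishing:
  assumes "1 \<le> k" and "1 \<le> l"
  obtains c :: int where "odd c"
    and "[[:1, 1:] ^ ((l + 1) * 2 ^ (k - 1) - 1) = smult (2 ^ (l - 1) * c) (ones_poly (2 ^ k))]
           (mod 2 ^ l, [:0, 1:] ^ 2 ^ k - 1)"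
proof -
  define j where "j = l - 1"
  define h :: nat where "h = 2 ^ (k - 1)"
  define E :: "int poly" where "E = [:0, 1:] ^ 2 ^ k - 1"
  define P :: "int poly" where "P = 1 + [:0, 1:] ^ h"
  define W :: "int poly" where "W = [:1, 1:] ^ (h - 1)"
  obtain G :: "int poly" where G: "[:1, 1:] ^ h = P + 2 * G"
    unfolding h_def P_def by (rule one_plus_x_pow_two_pow_decomp)
  define F where "F = (1 + G) ^ Suc j - G ^ Suc j"
  have l: "l = Suc j" and h: "1 \<le> h" and n: "2 ^ k = 2 * h"
    using assms by (simp_all add: j_def h_def power_Suc[symmetric])
  have idem: "[P * P = 2 * P] (mod 2 ^ l, E)"
    unfolding P_def E_def n by (rule one_plus_x_pow_square_cong)
  have PW: "[P * W = ones_poly (2 ^ k)] (mod 2, 0)"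
    using one_plus_x_pow_mult_pred_cong[of "k - 1"] assms(1)
    by (simp add: P_def W_def h_def power_Suc[symmetric])
  have "(l + 1) * h - 1 = h * Suc j + (h - 1)"
    using h by (simp add: l algebra_simps)
  then have "[:1, 1:] ^ ((l + 1) * h - 1) = (P + 2 * G) ^ Suc j * W"
    by (simp only: W_def G power_add power_mult)
  also have "[(P + 2 * G) ^ Suc j * W = (2 ^ j * P * F + 2 ^ l * G ^ Suc j) * W] (mod 2 ^ l, E)"
    using cong_pair_power_plus_double[OF idem] cong_pair_refl
    unfolding F_def l by (rule cong_pair_mult)
  also have "(2 ^ j * P * F + 2 ^ l * G ^ Suc j) * W =
      2 ^ j * (F * (P * W)) + 2 ^ l * (G ^ Suc j * W)"
    by (simp add: algebra_simps)
  also have "[2 ^ j * (F * (P * W)) + 2 ^ l * (G ^ Suc j * W) = 2 ^ j * (F * (P * W))]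
      (mod 2 ^ l, E)"
    by (rule cong_pair_dvd_left) simp
  also have "[2 ^ j * (F * (P * W)) = 2 ^ j * (F * ones_poly (2 ^ k))] (mod 2 ^ l, E)"
    using cong_pair_scale[OF cong_pair_mult_left[OF PW], of "2 ^ j"]
    unfolding l power_Suc2 by (rule cong_pair_zeroD)
  also have "[2 ^ j * (F * ones_poly (2 ^ k)) = 2 ^ j * smult (poly F 1) (ones_poly (2 ^ k))]
      (mod 2 ^ l, E)"
    unfolding E_def by (intro cong_pair_mult_left mult_ones_poly_cong)
  also have "2 ^ j * smult (poly F 1) (ones_poly (2 ^ k)) =
      smult (2 ^ (l - 1) * poly F 1) (ones_poly (2 ^ k))"
    by (simp add: j_def numeral_poly poly_const_pow mult.commute)
  finally have "[[:1, 1:] ^ ((l + 1) * 2 ^ (k - 1) - 1) =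
      smult (2 ^ (l - 1) * poly F 1) (ones_poly (2 ^ k))] (mod 2 ^ l, [:0, 1:] ^ 2 ^ k - 1)"
    by (simp only: h_def E_def)
  moreover have "odd (poly F 1)"
    by (auto simp: F_def even_diff)
  ultimately show thesis by (rule that[rotated])
qed

section \<open>The Ducci map as multiplication by 1 + x\<close>

(* cyclic_coeff n p i is the coefficient of x^(-i) in p modulo x^n - 1. Reading a vector of
   Z_m^n this way, backwards, turns ducci into multiplication by 1 + x and e_last into x. *)
definition cyclic_coeff :: "nat \<Rightarrow> 'a::comm_ring_1 poly \<Rightarrow> nat \<Rightarrow> 'a" where
  "cyclic_coeff n p i = (\<Sum>j\<le>degree p. if n dvd i + j then coeff p j else 0)"

lemma cyclic_coeff_eq_sum:
  assumes "degree p \<le> N"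
  shows "cyclic_coeff n p i = (\<Sum>j\<le>N. if n dvd i + j then coeff p j else 0)"
  unfolding cyclic_coeff_def
  by (rule sum.mono_neutral_left) (use assms in \<open>auto simp: coeff_eq_0\<close>)

lemma cyclic_coeff_add: "cyclic_coeff n (p + q) i = cyclic_coeff n p i + cyclic_coeff n q i"
proof -
  define N where "N = max (degree p) (degree q)"
  have "degree (p + q) \<le> N" "degree p \<le> N" "degree q \<le> N"
    by (simp_all add: N_def degree_add_le)
  then show ?thesis
    by (simp add: cyclic_coeff_eq_sum[of _ N] sum.distrib[symmetric] if_distrib cong: if_cong)
qed

lemma cyclic_coeff_diff: "cyclic_coeff n (p - q) i = cyclic_coeff n p i - cyclic_coeff n q i"
  using cyclic_coeff_add[of n q "p - q" i] by (simp add: algebra_simps)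

lemma cyclic_coeff_smult: "cyclic_coeff n (smult a p) i = a * cyclic_coeff n p i"
proof -
  have "cyclic_coeff n (smult a p) i =
      (\<Sum>j\<le>degree p. if n dvd i + j then coeff (smult a p) j else 0)"
    by (rule cyclic_coeff_eq_sum) (rule degree_smult_le)
  then show ?thesis
    by (simp add: cyclic_coeff_def sum_distrib_left if_distrib cong: if_cong)
qed

lemma cyclic_coeff_0 [simp]: "cyclic_coeff n 0 i = 0"
  unfolding cyclic_coeff_def by (simp cong: if_cong)

lemma cyclic_coeff_sum: "cyclic_coeff n (\<Sum>j\<in>A. f j) i = (\<Sum>j\<in>A. cyclic_coeff n (f j) i)"
  by (induction A rule: infinite_finite_induct) (simp_all add: cyclic_coeff_add)

lemma cyclic_coeff_const: "cyclic_coeff n [:c:] i = (if n dvd i then c else 0)"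
  by (simp add: cyclic_coeff_def)

lemma cyclic_coeff_pCons_0 [simp]: "cyclic_coeff n (pCons 0 p) i = cyclic_coeff n p (Suc i)"
proof -
  have "cyclic_coeff n (pCons 0 p) i =
      (\<Sum>j\<le>Suc (degree p). if n dvd i + j then coeff (pCons 0 p) j else 0)"
    by (rule cyclic_coeff_eq_sum) (rule degree_pCons_le)
  also have "\<dots> = cyclic_coeff n p (Suc i)"
    by (subst sum.atMost_Suc_shift)
      (simp only: coeff_pCons_Suc coeff_pCons_0, simp add: cyclic_coeff_def)
  finally show ?thesis .
qed

lemma cyclic_coeff_mult_x_pow: "cyclic_coeff n ([:0, 1:] ^ j * p) i = cyclic_coeff n p (i + j)"
  by (induction j arbitrary: i) (simp_all add: mult.assoc)

lemma cyclic_coeff_mod: "cyclic_coeff n p (i mod n) = cyclic_coeff n p i"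
  by (simp add: cyclic_coeff_def dvd_eq_mod_eq_0 mod_add_left_eq)

lemma cyclic_coeff_x_pow_minus_one: "cyclic_coeff n (([:0, 1:] ^ n - 1) * r) i = 0"
  using cyclic_coeff_mod[of n r "i + n"] cyclic_coeff_mod[of n r i]
  by (simp add: left_diff_distrib cyclic_coeff_diff cyclic_coeff_mult_x_pow)

lemma cyclic_coeff_one_plus_x:
  "cyclic_coeff n ([:1, 1:] * p) i = cyclic_coeff n p i + cyclic_coeff n p (Suc i)"
proof -
  have "[:1, 1:] * p = p + [:0, 1:] * p"
    by simp
  then show ?thesis by (simp add: cyclic_coeff_add)
qed

lemma cyclic_coeff_ones_poly:
  assumes "0 < n"
  shows "cyclic_coeff n (ones_poly n) i = 1"
proof (induction i)
  case 0
  have x_pow: "cyclic_coeff n ([:0, 1:] ^ j) 0 = (if n dvd j then 1 else 0)" for j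
    using cyclic_coeff_mult_x_pow[of n j "[:1:]" 0] by (simp add: cyclic_coeff_const)
  have "cyclic_coeff n (ones_poly n) 0 = (\<Sum>j<n. if n dvd j then 1 else 0)"
    by (simp only: ones_poly_def cyclic_coeff_sum x_pow)
  also have "\<dots> = (\<Sum>j<n. if j = 0 then 1 else 0)"
    by (rule sum.cong) (auto dest: nat_dvd_not_less)
  finally show ?case using assms by simp
next
  case (Suc i)
  have "cyclic_coeff n (ones_poly n :: 'a poly) (Suc i) = cyclic_coeff n ([:0, 1:] * ones_poly n) i"
    by simp
  also have "\<dots> = cyclic_coeff n (ones_poly n) i"
    using cyclic_coeff_x_pow_minus_one[of n 1 i]
    by (simp only: x_mult_ones_poly cyclic_coeff_add mult_1_right) simp
  finally show ?case using Suc.IH by simp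
qed

lemma cyclic_coeff_cong:
  assumes "[p = q] (mod [:a:], [:0, 1:] ^ n - 1)"
  shows "a dvd cyclic_coeff n p i - cyclic_coeff n q i"
proof -
  obtain r s where "p - q = [:a:] * r + ([:0, 1:] ^ n - 1) * s"
    using assms unfolding cong_pair_def by blast
  then have "cyclic_coeff n p i - cyclic_coeff n q i = a * cyclic_coeff n r i"
    by (simp flip: cyclic_coeff_diff
        add: cyclic_coeff_add cyclic_coeff_smult cyclic_coeff_x_pow_minus_one)
  then show ?thesis by simp
qed

definition poly_vector :: "nat \<Rightarrow> nat \<Rightarrow> int poly \<Rightarrow> nat \<Rightarrow> nat" where
  "poly_vector m n p = (\<lambda>i. if i < n then nat (cyclic_coeff n p i mod int m) else 0)"

lemma nat_mod_add_nat_mod: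
  assumes "0 < m"
  shows "(nat (a mod int m) + nat (b mod int m)) mod m = nat ((a + b) mod int m)"
proof -
  have "int ((nat (a mod int m) + nat (b mod int m)) mod m) = (a mod int m + b mod int m) mod int m"
    using assms by (simp add: zmod_int)
  also have "\<dots> = (a + b) mod int m"
    by (simp add: mod_add_eq)
  finally show ?thesis by (metis nat_int)
qed

lemma ducci_poly_vector:
  assumes "0 < m" and "0 < n"
  shows "ducci m n (poly_vector m n p) = poly_vector m n ([:1, 1:] * p)"
proof
  fix i
  have "cyclic_coeff n p (Suc i mod n) = cyclic_coeff n p (Suc i)"
    by (rule cyclic_coeff_mod)
  then show "ducci m n (poly_vector m n p) i = poly_vector m n ([:1, 1:] * p) i"
    unfolding ducci_def poly_vector_def cyclic_coeff_one_plus_x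
    using assms by (simp add: nat_mod_add_nat_mod)
qed

lemma ducci_zero: "ducci m n (\<lambda>_. 0) = (\<lambda>_. 0)"
  by (simp add: ducci_def fun_eq_iff)

lemma e_last_eq_poly_vector:
  assumes "2 \<le> m" and "0 < n"
  shows "e_last n = poly_vector m n [:0, 1:]"
proof
  fix i
  have "cyclic_coeff n [:0, 1 :: int:] i = (if n dvd Suc i then 1 else 0)"
    by (simp add: cyclic_coeff_const)
  moreover have "i < n \<Longrightarrow> n dvd Suc i \<longleftrightarrow> i = n - 1"
    by (auto simp: Suc_le_eq dest: dvd_imp_le)
  ultimately show "e_last n i = poly_vector m n [:0, 1:] i"
    using assms by (auto simp: e_last_def poly_vector_def)
qed

lemma ducci_funpow_e_last:
  assumes "2 \<le> m" and "0 < n"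
  shows "(ducci m n ^^ t) (e_last n) = poly_vector m n ([:1, 1:] ^ t * [:0, 1:])"
  using assms by (induction t) (simp_all add: e_last_eq_poly_vector ducci_poly_vector mult.assoc)

lemma poly_vector_cong:
  assumes "[p = q] (mod of_nat m, [:0, 1:] ^ n - 1)"
  shows "poly_vector m n p = poly_vector m n q"
proof -
  have "cyclic_coeff n p i mod int m = cyclic_coeff n q i mod int m" for i
    using assms cyclic_coeff_cong[of p q "int m" n i] by (simp add: of_nat_poly mod_eq_dvd_iff)
  then show ?thesis by (simp add: poly_vector_def fun_eq_iff)
qed

lemma ducci_e_last_vanishes:
  assumes "1 \<le> k" and "1 \<le> l"
  shows "(ducci (2 ^ l) (2 ^ k) ^^ ((l + 1) * 2 ^ (k - 1))) (e_last (2 ^ k)) = (\<lambda>_. 0)"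
proof -
  have "2 \<le> (2::nat) ^ l"
    using assms(2) by (simp add: self_le_power)
  then have "(ducci (2 ^ l) (2 ^ k) ^^ ((l + 1) * 2 ^ (k - 1))) (e_last (2 ^ k)) =
      poly_vector (2 ^ l) (2 ^ k) ([:1, 1:] ^ ((l + 1) * 2 ^ (k - 1)) * [:0, 1:])"
    by (simp add: ducci_funpow_e_last)
  also have "\<dots> = poly_vector (2 ^ l) (2 ^ k) (0 * [:0, 1:])"
  proof (rule poly_vector_cong)
    show "[[:1, 1:] ^ ((l + 1) * 2 ^ (k - 1)) * [:0, 1:] = 0 * [:0, 1:]]
        (mod of_nat (2 ^ l), [:0, 1:] ^ 2 ^ k - 1)"
      unfolding of_nat_power of_nat_numeral
      using one_plus_x_pow_vanishes[OF assms(1)] cong_pair_refl by (rule cong_pair_mult)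
  qed
  finally show ?thesis
    by (simp add: poly_vector_def fun_eq_iff)
qed

lemma two_pow_dvd_two_pow_pred_mult_imp_even:
  assumes "1 \<le> l" and "(2::int) ^ l dvd 2 ^ (l - 1) * c"
  shows "even c"
proof -
  obtain j where "l = Suc j"
    using assms(1) by (cases l) auto
  with assms(2) have "2 ^ j * 2 dvd 2 ^ j * c"
    by (simp add: mult.commute)
  then show ?thesis
    by (simp only: dvd_mult_cancel_left) simp
qed

lemma ducci_e_last_before_vanishing:
  assumes "1 \<le> k" and "1 \<le> l"
  shows "(ducci (2 ^ l) (2 ^ k) ^^ ((l + 1) * 2 ^ (k - 1) - 1)) (e_last (2 ^ k)) \<noteq> (\<lambda>_. 0)"
proof
  assume vanishes:
    "(ducci (2 ^ l) (2 ^ k) ^^ ((l + 1) * 2 ^ (k - 1) - 1)) (e_last (2 ^ k)) = (\<lambda>_. 0)"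
  obtain c :: int where "odd c" and c: "[[:1, 1:] ^ ((l + 1) * 2 ^ (k - 1) - 1) =
      smult (2 ^ (l - 1) * c) (ones_poly (2 ^ k))] (mod 2 ^ l, [:0, 1:] ^ 2 ^ k - 1)"
    using assms by (rule one_plus_x_pow_before_vanishing)
  have "2 \<le> (2::nat) ^ l"
    using assms(2) by (simp add: self_le_power)
  then have "(ducci (2 ^ l) (2 ^ k) ^^ ((l + 1) * 2 ^ (k - 1) - 1)) (e_last (2 ^ k)) =
      poly_vector (2 ^ l) (2 ^ k) ([:1, 1:] ^ ((l + 1) * 2 ^ (k - 1) - 1) * [:0, 1:])"
    by (simp add: ducci_funpow_e_last)
  also have "\<dots> =
      poly_vector (2 ^ l) (2 ^ k) (smult (2 ^ (l - 1) * c) (ones_poly (2 ^ k)) * [:0, 1:])"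
  proof (rule poly_vector_cong)
    show "[[:1, 1:] ^ ((l + 1) * 2 ^ (k - 1) - 1) * [:0, 1:] =
        smult (2 ^ (l - 1) * c) (ones_poly (2 ^ k)) * [:0, 1:]]
        (mod of_nat (2 ^ l), [:0, 1:] ^ 2 ^ k - 1)"
      unfolding of_nat_power of_nat_numeral using c cong_pair_refl by (rule cong_pair_mult)
  qed
  finally have vector_zero:
      "poly_vector (2 ^ l) (2 ^ k) (smult (2 ^ (l - 1) * c) (ones_poly (2 ^ k)) * [:0, 1:]) = (\<lambda>_. 0)"
    unfolding vanishes by (rule sym)
  have "nat (2 ^ (l - 1) * c mod 2 ^ l) = 0"
    using fun_cong[OF vector_zero, of 0]
    by (simp add: poly_vector_def cyclic_coeff_smult cyclic_coeff_ones_poly)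
  moreover have "0 \<le> 2 ^ (l - 1) * c mod 2 ^ l"
    by simp
  ultimately have "2 ^ (l - 1) * c mod 2 ^ l = 0"
    by (metis nat_0_le of_nat_0)
  then have "2 ^ l dvd 2 ^ (l - 1) * c"
    by (simp add: dvd_eq_mod_eq_0)
  with assms(2) \<open>odd c\<close> show False
    using two_pow_dvd_two_pow_pred_mult_imp_even by blast
qed

theorem theorem1p2:
  fixes k l :: nat
  assumes "k \<ge> 1" and "l \<ge> 1"
  shows "L_fun (2 ^ l) (2 ^ k) = (l + 1) * 2 ^ (k - 1)
       \<and> P_fun (2 ^ l) (2 ^ k) = 1"
proof -
  define T where "T = (l + 1) * 2 ^ (k - 1)"
  have hit: "(ducci (2 ^ l) (2 ^ k) ^^ T) (e_last (2 ^ k)) = (\<lambda>_. 0)"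
    unfolding T_def using assms by (rule ducci_e_last_vanishes)
  have "(ducci (2 ^ l) (2 ^ k) ^^ (T - 1)) (e_last (2 ^ k)) \<noteq> (\<lambda>_. 0)"
    unfolding T_def using assms by (rule ducci_e_last_before_vanishing)
  then have "\<forall>t<T. (ducci (2 ^ l) (2 ^ k) ^^ t) (e_last (2 ^ k)) \<noteq> (\<lambda>_. 0)"
    using funpow_fixpoint_stays[where f = "ducci (2 ^ l) (2 ^ k)", OF ducci_zero]
    by (metis Suc_pred' less_Suc_eq_le not_less0 zero_less_iff_neq_zero)
  then show ?thesis
    using Len_Per_first_hit[OF ducci_zero hit] by (simp add: L_fun_def P_fun_def T_def)
qed

end
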